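(* Let $\mu$ be the invariant self-similar measure of a homogeneous WIFS $(\lambda x+t_i,p_i)_{i\in I}$ with $0<\lambda<1$, supported in $[0,1)$. Let $q>1$ be such that $\alpha=\tau_\mu'(q)$ exists, and write $\tau=\tau_\mu$. (i) For every $\kappa>0$ there is $\eta=\eta(\kappa,q)>0$ such that for all sufficiently large $m$: for every $s\in\mathbb{N}$, every $I\in\mathcal{D}_s$ and every collection $\mathcal{D}'$ of intervals of $\mathcal{D}_{s+m}$ contained in $I$ with $|\mathcal{D}'|\le 2^{(\tau^*(\alpha)-\kappa)m}$, \[ \sum_{J\in\mathcal{D}'}\mu(J)^q\le 2^{-(\tau(q)+\eta)m}\mu(2I)^q . \] (ii) For every $\delta>0$, for all sufficiently large $m$, for every $s\in\mathbb{N}$ and $I\in\mathcal{D}_s$, \[ \sum_{J\in\mathcal{D}_{s+m},\,J\subset I}\mu(J)^q\le 2^{-(\tau(q)-\delta)m}\mu(2I)^q . \]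
   Context: Invariant measure: $\mu=\sum_ip_i\,f_i\mu$ with $f_i(x)=\lambda x+t_i$. Logs base 2. $\mathcal{D}_m=\{[j2^{-m},(j+1)2^{-m}):j\in\mathbb{Z}\}$. For $q>0$, $\tau_\mu(q)=\liminf_{m\to\infty}-\frac1m\log\sum_{J\in\mathcal{D}_m,\mu(J)>0}\mu(J)^q$, and $\tau^*(\alpha)=\inf_{q>0}(\alpha q-\tau(q))$ (the Legendre transform). $2I$ denotes the interval with the same center as $I$ and twice its length. *)

theory Defs
  imports "HOL-Probability.Probability"
begin

definition dyadic :: "nat \<Rightarrow> real set set" where
  "dyadic m = {{real_of_int j / 2 ^ m ..< (real_of_int j + 1) / 2 ^ m} | j. True}"

definition double_int :: "real set \<Rightarrow> real set" where
  "double_int I = {Inf I - (Sup I - Inf I) / 2 ..< Sup I + (Sup I - Inf I) / 2}"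

definition tau_mu :: "real measure \<Rightarrow> real \<Rightarrow> real" where
  "tau_mu \<mu> q = real_of_ereal (liminf (\<lambda>m::nat. ereal (- log 2
      (\<Sum>J\<in>{J\<in>dyadic m. measure \<mu> J > 0}. measure \<mu> J powr q) / real m)))"

definition legendre :: "(real \<Rightarrow> real) \<Rightarrow> real \<Rightarrow> real" where
  "legendre \<tau> \<alpha> = (INF q\<in>{0<..}. \<alpha> * q - \<tau> q)"

end

theory Submission
  imports Defs
begin

text \<open>
  Iterating the self-similarity k times writes mu as a convex combination, with weights
  p_w, of the images of mu under the maps f_w of contraction ratio lam^k. With lam^k about
  2^-s, only the words w whose image of [0,1) meets I in D_s contribute to subintervals of I;
  each such image lies in 2I, so their total weight is at most mu(2I). Jensen's inequality then
  bounds the level-(s+m) L^q-sum inside I by mu(2I)^q times the L^q-sum of one rescaled copy at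
  level about m, which is 2^(-(tau(q) - delta) m) for large m: this is (ii).
  For (i), split a sparse family D' at the threshold beta = 2^(-(alpha - eps) m) mu(2I): the
  heavy intervals are controlled by (ii) at an exponent q + h slightly above q, the light ones
  by their number. Since tau is concave and differentiable at q with tau'(q) = alpha, both
  contributions beat 2^(-tau(q) m) by an exponential factor.
\<close>

subsection \<open>Dyadic intervals\<close>

definition dyadic_interval :: "nat \<Rightarrow> int \<Rightarrow> real set" where
  "dyadic_interval n j = {real_of_int j / 2 ^ n ..< (real_of_int j + 1) / 2 ^ n}"

lemma dyadic_eq_range: "dyadic n = range (dyadic_interval n)"
  unfolding dyadic_def dyadic_interval_def by auto

lemma mem_dyadic_interval_iff:
  "x \<in> dyadic_interval n j \<longleftrightarrow> real_of_int j \<le> x * 2^n \<and> x * 2^n < real_of_int j + 1"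
  unfolding dyadic_interval_def by (auto simp: field_simps)

lemma mem_dyadic_interval_floor: "x \<in> dyadic_interval n j \<longleftrightarrow> j = \<lfloor>x * 2^n\<rfloor>"
  unfolding mem_dyadic_interval_iff by (metis floor_eq_iff floor_unique)

lemma left_endpoint_in_dyadic_interval: "real_of_int j / 2^n \<in> dyadic_interval n j"
  unfolding dyadic_interval_def by (auto simp: divide_strict_right_mono)

lemma inj_dyadic_interval: "inj (dyadic_interval n)"
proof
  fix i j assume "dyadic_interval n i = dyadic_interval n j"
  then have "real_of_int i / 2^n \<in> dyadic_interval n j"
    using left_endpoint_in_dyadic_interval by metis
  then show "i = j" unfolding mem_dyadic_interval_floor by simp
qed

lemma dyadic_interval_disjoint: "i \<noteq> j \<Longrightarrow> dyadic_interval n i \<inter> dyadic_interval n j = {}"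
  by (auto simp: mem_dyadic_interval_floor)

lemma dyadic_interval_borel [measurable]: "dyadic_interval n j \<in> sets borel"
  unfolding dyadic_interval_def by simp

lemma UN_dyadic_interval_unit: "(\<Union>j\<in>{0..<(2::int)^n}. dyadic_interval n j) = {0..<1}"
proof (intro equalityI subsetI)
  fix x assume "x \<in> (\<Union>j\<in>{0..<(2::int)^n}. dyadic_interval n j)"
  then obtain j where j: "0 \<le> j" "j < 2^n" "x \<in> dyadic_interval n j" by auto
  then have "real_of_int j \<le> x * 2^n" "x * 2^n < real_of_int j + 1"
    by (auto simp: mem_dyadic_interval_iff)
  moreover have "j + 1 \<le> 2^n" using j(2) by simp
  then have "real_of_int (j + 1) \<le> real_of_int (2^n)" by (simp only: of_int_le_iff)
  then have "real_of_int j + 1 \<le> 2^n" by simp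
  moreover have "(0::real) \<le> real_of_int j" using j by simp
  ultimately have a: "0 \<le> x * 2^n" and b: "x * 2^n < 1 * 2^n" by linarith+
  have "(0::real) < 2^n" by simp
  with a have "0 \<le> x" by (simp add: zero_le_mult_iff)
  moreover from b have "x < 1" using mult_less_cancel_right_pos[of "2^n" x 1] by simp
  ultimately show "x \<in> {0..<1}" by simp
next
  fix x :: real assume x: "x \<in> {0..<1}"
  then have "x * 2^n < 2^n" by simp
  then have "\<lfloor>x * 2^n\<rfloor> \<in> {0..<2^n}" using x by (simp add: floor_less_iff)
  moreover have "x \<in> dyadic_interval n \<lfloor>x * 2^n\<rfloor>" by (simp add: mem_dyadic_interval_floor)
  ultimately show "x \<in> (\<Union>j\<in>{0..<(2::int)^n}. dyadic_interval n j)" by blast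
qed

lemma double_int_atLeastLessThan:
  fixes a b :: real assumes "a < b"
  shows "double_int {a..<b} = {a - (b - a) / 2 ..< b + (b - a) / 2}"
  using assms by (simp add: double_int_def)

lemma dyadic_interval_eq_atLeastLessThan: "dyadic_interval s j = {real_of_int j / 2^s ..< real_of_int j / 2^s + 1 / 2^s}"
  unfolding dyadic_interval_def by (simp add: add_divide_distrib)

lemma double_int_borel [measurable]: "double_int I \<in> sets borel"
  unfolding double_int_def by simp

lemma atLeastLessThan_subset_double:
  fixes a b :: real assumes "a < b" shows "{a..<b} \<subseteq> double_int {a..<b}"
  using assms by (subst double_int_atLeastLessThan) auto

lemma dyadic_interval_subset_double: "dyadic_interval s j \<subseteq> double_int (dyadic_interval s j)"
  unfolding dyadic_interval_eq_atLeastLessThan by (rule atLeastLessThan_subset_double) simp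

lemma finite_dyadic_subintervals: "finite {j. dyadic_interval (s+m) j \<subseteq> dyadic_interval s j0}"
proof (rule finite_subset)
  show "{j. dyadic_interval (s+m) j \<subseteq> dyadic_interval s j0} \<subseteq> {j0 * 2^m .. (j0+1) * 2^m}"
  proof
    fix j assume "j \<in> {j. dyadic_interval (s+m) j \<subseteq> dyadic_interval s j0}"
    then have "real_of_int j / 2^(s+m) \<in> dyadic_interval s j0"
      using left_endpoint_in_dyadic_interval by blast
    moreover have "real_of_int j / 2^(s+m) * 2^s = real_of_int j / 2^m" by (simp add: power_add)
    ultimately have "real_of_int j0 \<le> real_of_int j / 2^m" "real_of_int j / 2^m < real_of_int j0 + 1"
      unfolding mem_dyadic_interval_iff by auto
    then have "real_of_int (j0 * 2^m) \<le> real_of_int j" "real_of_int j \<le> real_of_int ((j0+1) * 2^m)"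
      by (simp_all add: field_simps)
    then show "j \<in> {j0 * 2^m .. (j0+1) * 2^m}" by (simp only: of_int_le_iff atLeastAtMost_iff)
  qed
qed simp

lemma finite_dyadic_subsets: "finite {J\<in>dyadic (s+m). J \<subseteq> dyadic_interval s j0}"
proof -
  have "{J\<in>dyadic (s+m). J \<subseteq> dyadic_interval s j0} =
        dyadic_interval (s+m) ` {j. dyadic_interval (s+m) j \<subseteq> dyadic_interval s j0}"
    by (auto simp: dyadic_eq_range)
  then show ?thesis using finite_dyadic_subintervals by simp
qed

lemma grid_cell_subset_dyadic_intervals:
  assumes "d \<le> 1 / 2^n"
  shows "{u + real_of_int j * d ..< u + (real_of_int j + 1) * d} \<subseteq>
           dyadic_interval n \<lfloor>(u + real_of_int j * d) * 2^n\<rfloor> \<union>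
           dyadic_interval n (\<lfloor>(u + real_of_int j * d) * 2^n\<rfloor> + 1)"
proof
  fix x assume x: "x \<in> {u + real_of_int j * d ..< u + (real_of_int j + 1) * d}"
  define k where "k = \<lfloor>(u + real_of_int j * d) * 2^n\<rfloor>"
  have "(u + real_of_int j * d) * 2^n \<le> x * 2^n" using x by simp
  then have "k \<le> \<lfloor>x * 2^n\<rfloor>" unfolding k_def by (rule floor_mono)
  have "x * 2^n < (u + (real_of_int j + 1) * d) * 2^n" using x by simp
  moreover have "(u + (real_of_int j + 1) * d) * 2^n = (u + real_of_int j * d) * 2^n + d * 2^n"
    by (simp add: algebra_simps)
  moreover have "d * 2^n \<le> 1" using assms by (simp add: field_simps)
  ultimately have "\<lfloor>x * 2^n\<rfloor> < k + 2" unfolding k_def by linarith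
  with \<open>k \<le> \<lfloor>x * 2^n\<rfloor>\<close> have "\<lfloor>x * 2^n\<rfloor> = k \<or> \<lfloor>x * 2^n\<rfloor> = k + 1" by linarith
  then show "x \<in> dyadic_interval n k \<union> dyadic_interval n (k + 1)"
    by (auto simp: mem_dyadic_interval_floor)
qed

lemma grid_floor_spread:
  assumes d: "1 \<le> d * 2^n * 2^r"
    and eq: "\<lfloor>(u + real_of_int i * d) * 2^n\<rfloor> = \<lfloor>(u + real_of_int j * d) * 2^n\<rfloor>" and "i \<le> j"
  shows "j - i < 2^r"
proof -
  have "(u + real_of_int j * d) * 2^n - (u + real_of_int i * d) * 2^n < 1" using eq by linarith
  then have lt: "real_of_int (j - i) * (d * 2^n) < 1" by (simp add: algebra_simps)
  have "real_of_int (j - i) \<le> real_of_int (j - i) * (d * 2^n * 2^r)"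
    using mult_left_mono[OF d] \<open>i \<le> j\<close> by simp
  also have "\<dots> = (real_of_int (j - i) * (d * 2^n)) * 2^r" by (simp add: algebra_simps)
  also have "\<dots> < 1 * 2^r" using lt by (intro mult_strict_right_mono) auto
  finally have "real_of_int (j - i) < real_of_int (2^r)" by simp
  then show ?thesis by (simp only: of_int_less_iff)
qed

fun iter_map :: "real \<Rightarrow> ('i \<Rightarrow> real) \<Rightarrow> 'i list \<Rightarrow> real \<Rightarrow> real" where
  "iter_map l t [] x = x"
| "iter_map l t (i # w) x = iter_map l t w (l * x + t i)"

lemma iter_map_affine: "iter_map l t w x = l ^ length w * x + iter_map l t w 0"
proof (induction w arbitrary: x)
  case (Cons i w)
  have a: "iter_map l t (i # w) x = l ^ length w * (l * x + t i) + iter_map l t w 0"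
    using Cons.IH[of "l * x + t i"] by simp
  have b: "iter_map l t (i # w) 0 = l ^ length w * t i + iter_map l t w 0"
    using Cons.IH[of "t i"] by simp
  show ?case unfolding a b by (simp add: algebra_simps)
qed simp

lemma iter_map_measurable: "iter_map l t w \<in> borel_measurable borel"
proof -
  have "iter_map l t w = (\<lambda>x. l ^ length w * x + iter_map l t w 0)"
    by (rule ext, rule iter_map_affine)
  also have "\<dots> \<in> borel_measurable borel" by measurable
  finally show ?thesis .
qed

lemma vimage_iter_map_borel: "A \<in> sets borel \<Longrightarrow> iter_map l t w -` A \<in> sets borel"
  using measurable_sets[OF iter_map_measurable, of A l t w] by simp

lemma vimage_iter_map_dyadic_interval:
  fixes l :: real and t :: "'i \<Rightarrow> real" and w :: "'i list"
  assumes "l > 0" and "length w = k"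
  defines "u \<equiv> - iter_map l t w 0 / l^k"
  shows "iter_map l t w -` dyadic_interval N j =
           {u + real_of_int j * (1 / (2^N * l^k)) ..< u + (real_of_int j + 1) * (1 / (2^N * l^k))}"
    (is "_ = {?A ..< ?B}")
proof -
  define c where "c = iter_map l t w 0"
  have L: "l^k > 0" using assms by simp
  have F: "iter_map l t w x = l^k * x + c" for x
    using assms(2) iter_map_affine[of l t w x] by (simp add: c_def)
  have eA: "l^k * ?A + c = real_of_int j / 2^N" and eB: "l^k * ?B + c = (real_of_int j + 1) / 2^N"
    using L assms(1) by (simp_all add: u_def c_def field_simps)
  have "x \<in> iter_map l t w -` dyadic_interval N j \<longleftrightarrow> x \<in> {?A ..< ?B}" for x
  proof -
    have "x \<in> iter_map l t w -` dyadic_interval N j \<longleftrightarrow>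
        l^k * ?A + c \<le> l^k * x + c \<and> l^k * x + c < l^k * ?B + c"
      unfolding eA eB by (simp add: F dyadic_interval_def)
    also have "\<dots> \<longleftrightarrow> ?A \<le> x \<and> x < ?B" using L by simp
    finally show ?thesis by simp
  qed
  then show ?thesis by blast
qed

lemma convex_on_powr_nonneg:
  assumes "q \<ge> 1" shows "convex_on {0::real..} (\<lambda>x. x powr q)"
  unfolding convex_on_def
proof (intro conjI ballI allI impI)
  show "convex {0::real..}" by simp
  have pos: "(u *\<^sub>R x + v *\<^sub>R y) powr q \<le> u * x powr q + v * y powr q"
    if "x > 0" "y > 0" "u \<ge> 0" "v \<ge> 0" "u + v = 1" for x y u v :: real
    using powr_convex[OF assms] that unfolding convex_on_def by auto
  have scaled: "(v * y) powr q \<le> v * y powr q" if "0 \<le> v" "v \<le> 1" "0 \<le> y" for v y :: real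
  proof (cases "v = 0 \<or> y = 0")
    case False
    then have "(v * y) powr q = v powr q * y powr q" using that by (simp add: powr_mult)
    also have "\<dots> \<le> v * y powr q"
      using powr_le_one_le[of v q] that assms False by (intro mult_right_mono) auto
    finally show ?thesis .
  qed auto
  fix x y u v :: real
  assume "x \<in> {0..}" "y \<in> {0..}" "0 \<le> u" "0 \<le> v" "u + v = 1"
  then show "(u *\<^sub>R x + v *\<^sub>R y) powr q \<le> u * x powr q + v * y powr q"
    using pos[of x y u v] scaled[of v y] scaled[of u x] by (cases "x = 0"; cases "y = 0") auto
qed

lemma powr_weighted_sum_le:
  fixes P y :: "'a \<Rightarrow> real"
  assumes R: "finite R" and P: "\<And>i. i \<in> R \<Longrightarrow> P i \<ge> 0" and y: "\<And>i. i \<in> R \<Longrightarrow> y i \<ge> 0"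
    and q: "q \<ge> 1"
  shows "(\<Sum>i\<in>R. P i * y i) powr q \<le> (\<Sum>i\<in>R. P i) powr (q - 1) * (\<Sum>i\<in>R. P i * y i powr q)"
proof (cases "(\<Sum>i\<in>R. P i) = 0")
  case True
  then have "\<forall>i\<in>R. P i = 0" using sum_nonneg_eq_0_iff[OF R] P by blast
  then show ?thesis by simp
next
  case False
  define T where "T = (\<Sum>i\<in>R. P i)"
  have T: "T > 0" using False P sum_nonneg[of R P] by (simp add: T_def order_less_le)
  have "(\<Sum>i\<in>R. (P i / T) *\<^sub>R y i) powr q \<le> (\<Sum>i\<in>R. (P i / T) * y i powr q)"
  proof (rule convex_on_sum[OF R _ convex_on_powr_nonneg[OF q]])
    show "(\<Sum>i\<in>R. P i / T) = 1" using T by (simp add: T_def sum_divide_distrib[symmetric])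
  qed (use P y T False in auto)
  then have "((\<Sum>i\<in>R. P i * y i) / T) powr q \<le> (\<Sum>i\<in>R. P i * y i powr q) / T"
    by (simp add: sum_divide_distrib)
  moreover have "((\<Sum>i\<in>R. P i * y i) / T) powr q = (\<Sum>i\<in>R. P i * y i) powr q / T powr q"
    using T P y by (intro powr_divide)
  ultimately have "(\<Sum>i\<in>R. P i * y i) powr q \<le> (T powr q / T) * (\<Sum>i\<in>R. P i * y i powr q)"
    using T by (simp add: divide_le_eq mult.commute)
  also have "T powr q / T = T powr (q - 1)" using T by (simp add: powr_diff)
  finally show ?thesis by (simp add: T_def)
qed

lemma powr_minus_one_mult_self: "(x::real) \<ge> 0 \<Longrightarrow> x powr (q - 1) * x = x powr q"
  by (cases "x = 0") (simp_all add: powr_diff)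

lemma powr_add_le:
  fixes y z q :: real assumes "0 \<le> y" "0 \<le> z" "0 \<le> q"
  shows "(y + z) powr q \<le> 2 powr q * (y powr q + z powr q)"
proof -
  have "(y + z) powr q \<le> (2 * max y z) powr q" by (rule powr_mono2) (use assms in auto)
  also have "\<dots> = 2 powr q * max y z powr q" using assms by (simp add: powr_mult)
  also have "\<dots> \<le> 2 powr q * (y powr q + z powr q)"
    by (intro mult_left_mono) (auto simp: max_def)
  finally show ?thesis .
qed

lemma card_fiber_le_of_spread:
  fixes f :: "int \<Rightarrow> int" and M :: int
  assumes K: "finite K"
    and spread: "\<And>i j. i \<in> K \<Longrightarrow> j \<in> K \<Longrightarrow> f i = f j \<Longrightarrow> i \<le> j \<Longrightarrow> j - i < M"
  shows "card {j\<in>K. f j = k} \<le> nat M"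
proof (cases "{j\<in>K. f j = k} = {}")
  case True
  then show ?thesis unfolding True by simp
next
  case False
  define F where "F = {j\<in>K. f j = k}"
  have F: "finite F" "F \<noteq> {}" using K False by (auto simp: F_def)
  define a where "a = Min F"
  have aF: "a \<in> F" using F by (simp add: a_def)
  have "F \<subseteq> {a..<a+M}"
  proof
    fix j assume j: "j \<in> F"
    have "a \<le> j" using F j by (simp add: a_def)
    moreover have "j - a < M" using spread[of a j] aF j \<open>a \<le> j\<close> by (auto simp: F_def)
    ultimately show "j \<in> {a..<a+M}" by simp
  qed
  then have "card F \<le> card {a..<a+M}" by (intro card_mono) auto
  then show ?thesis by (simp add: F_def)
qed

lemma sum_comp_le_card_fiber:
  fixes f :: "'b \<Rightarrow> real"
  assumes K: "finite K" and f: "\<And>k. f k \<ge> 0" and N: "\<And>k. card {j\<in>K. \<kappa> j = k} \<le> N"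
  shows "(\<Sum>j\<in>K. f (\<kappa> j)) \<le> real N * (\<Sum>k\<in>\<kappa> ` K. f k)"
proof -
  have "(\<Sum>j\<in>K. f (\<kappa> j)) = (\<Sum>k\<in>\<kappa> ` K. \<Sum>j\<in>{j\<in>K. \<kappa> j = k}. f (\<kappa> j))"
    by (rule sum.image_gen[OF K])
  also have "\<dots> = (\<Sum>k\<in>\<kappa> ` K. real (card {j\<in>K. \<kappa> j = k}) * f k)"
    by (rule sum.cong[OF refl]) simp
  also have "\<dots> \<le> (\<Sum>k\<in>\<kappa> ` K. real N * f k)"
    by (rule sum_mono) (use N f in \<open>auto intro!: mult_right_mono\<close>)
  finally show ?thesis by (simp add: sum_distrib_left)
qed

lemma sum_powr_le_threshold:
  fixes f :: "'a \<Rightarrow> real"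
  assumes "finite D" "\<And>x. x \<in> D \<Longrightarrow> 0 \<le> f x" "\<beta> > 0" "0 \<le> q" "0 \<le> h"
  shows "(\<Sum>x\<in>D. f x powr q) \<le> \<beta> powr (-h) * (\<Sum>x\<in>D. f x powr (q + h)) + card D * \<beta> powr q"
proof -
  have "f x powr q \<le> \<beta> powr (-h) * f x powr (q + h) + \<beta> powr q" if "x \<in> D" for x
  proof (cases "\<beta> \<le> f x")
    case True
    then have "f x powr q = f x powr (q + h) * f x powr (-h)"
      using assms by (simp add: powr_add[symmetric])
    also have "\<dots> \<le> f x powr (q + h) * \<beta> powr (-h)"
      using powr_mono2'[of "-h" \<beta> "f x"] True assms by (intro mult_left_mono) auto
    finally show ?thesis by (simp add: mult.commute add_increasing2)
  next
    case False
    then have "f x powr q \<le> \<beta> powr q" using assms that by (intro powr_mono2) auto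
    then show ?thesis by (simp add: add_increasing)
  qed
  then have "(\<Sum>x\<in>D. f x powr q) \<le> (\<Sum>x\<in>D. \<beta> powr (-h) * f x powr (q + h) + \<beta> powr q)"
    by (rule sum_mono)
  then show ?thesis by (simp add: sum.distrib sum_distrib_left)
qed

text \<open>Heavy terms are weighed with the exponent \<open>q + h\<close>, light ones are counted;
  the threshold is \<open>2\<^sup>-\<^sup>\<gamma>\<^sup>m M\<close>.\<close>
lemma sum_powr_two_scale_le:
  fixes f :: "'a \<Rightarrow> real" and m :: real
  assumes E: "finite E" "\<And>x. x \<in> E \<Longrightarrow> 0 \<le> f x" and D: "D \<subseteq> E" "\<And>x. x \<in> D \<Longrightarrow> f x \<le> M"
    and q: "q > 0" and h: "h > 0" and m: "m \<ge> 0"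
    and sum_E: "(\<Sum>x\<in>E. f x powr (q + h)) \<le> 2 powr (- a * m) * M powr (q + h)"
    and card_D: "real (card D) \<le> 2 powr (b * m)"
  shows "(\<Sum>x\<in>D. f x powr q) \<le> (2 powr ((\<gamma> * h - a) * m) + 2 powr ((b - \<gamma> * q) * m)) * M powr q"
proof (cases "M > 0")
  case M: True
  define \<beta> where "\<beta> = 2 powr (- \<gamma> * m) * M"
  have \<beta>: "\<beta> > 0" using M by (simp add: \<beta>_def)
  have fin: "finite D" using D E finite_subset by blast
  have sub: "(\<Sum>x\<in>D. f x powr (q + h)) \<le> (\<Sum>x\<in>E. f x powr (q + h))"
    by (rule sum_mono2[OF E(1) D(1)]) simp
  have "(\<Sum>x\<in>D. f x powr q) \<le> \<beta> powr (-h) * (\<Sum>x\<in>D. f x powr (q + h)) + card D * \<beta> powr q"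
    by (rule sum_powr_le_threshold) (use fin D E \<beta> q h in auto)
  also have "\<dots> \<le> \<beta> powr (-h) * (\<Sum>x\<in>E. f x powr (q + h)) + card D * \<beta> powr q"
    by (rule add_right_mono[OF mult_left_mono[OF sub]]) simp
  also have "\<dots> \<le> \<beta> powr (-h) * (2 powr (- a * m) * M powr (q + h)) + 2 powr (b * m) * \<beta> powr q"
    by (rule add_mono[OF mult_left_mono[OF sum_E] mult_right_mono[OF card_D]]) simp_all
  also have "\<beta> powr (-h) * (2 powr (- a * m) * M powr (q + h)) = 2 powr ((\<gamma> * h - a) * m) * M powr q"
  proof -
    have "\<beta> powr (-h) = 2 powr (\<gamma> * h * m) * M powr (-h)"
      using M by (simp add: \<beta>_def powr_mult powr_powr mult_ac)
    then have "\<beta> powr (-h) * (2 powr (- a * m) * M powr (q + h))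
        = (2 powr (\<gamma> * h * m) * 2 powr (- a * m)) * (M powr (-h) * M powr (q + h))"
      by (simp only: mult_ac)
    also have "M powr (-h) * M powr (q + h) = M powr q" using M by (simp add: powr_add[symmetric])
    also have "2 powr (\<gamma> * h * m) * 2 powr (- a * m) = 2 powr ((\<gamma> * h - a) * m)"
      by (simp add: powr_add[symmetric] algebra_simps)
    finally show ?thesis .
  qed
  also have "2 powr (b * m) * \<beta> powr q = 2 powr ((b - \<gamma> * q) * m) * M powr q"
  proof -
    have "\<beta> powr q = 2 powr (- \<gamma> * q * m) * M powr q"
      using M by (simp add: \<beta>_def powr_mult powr_powr mult_ac)
    then have "2 powr (b * m) * \<beta> powr q = (2 powr (b * m) * 2 powr (- \<gamma> * q * m)) * M powr q"
      by (simp only: mult_ac)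
    also have "2 powr (b * m) * 2 powr (- \<gamma> * q * m) = 2 powr ((b - \<gamma> * q) * m)"
      by (simp add: powr_add[symmetric] algebra_simps)
    finally show ?thesis .
  qed
  finally show ?thesis by (simp add: distrib_right)
next
  case False
  have "f x = 0" if x: "x \<in> D" for x
  proof -
    have "0 \<le> f x" using x D(1) E(2) by blast
    moreover have "f x \<le> M" using x D(2) by blast
    ultimately show "f x = 0" using False by linarith
  qed
  then show ?thesis using q by simp
qed

lemma eventually_le_two_powr:
  assumes "\<delta> > 0" shows "\<forall>\<^sub>F m in sequentially. C \<le> 2 powr (\<delta> * real m)"
proof -
  obtain M :: nat where "log 2 (max C 1) / \<delta> \<le> real M" using real_arch_simple by blast
  then have M: "log 2 (max C 1) \<le> \<delta> * real M" using assms by (simp add: pos_divide_le_eq mult.commute)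
  show ?thesis unfolding eventually_sequentially
  proof (intro exI[of _ M] allI impI)
    fix m assume "M \<le> m"
    then have "\<delta> * real M \<le> \<delta> * real m" using assms by simp
    have "C \<le> 2 powr log 2 (max C 1)" by simp
    also have "\<dots> \<le> 2 powr (\<delta> * real m)"
      using M \<open>\<delta> * real M \<le> \<delta> * real m\<close> by (intro powr_mono) auto
    finally show "C \<le> 2 powr (\<delta> * real m)" .
  qed
qed

subsection \<open>The self-similar measure\<close>

locale homogeneous_wifs =
  fixes \<mu> :: "real measure" and Idx :: "'i set" and p t :: "'i \<Rightarrow> real" and lam :: real
  assumes finite_Idx: "finite Idx"
    and p_pos: "\<And>i. i \<in> Idx \<Longrightarrow> p i > 0"
    and lam: "0 < lam" "lam < 1"
    and prob: "prob_space \<mu>" and sets_eq: "sets \<mu> = sets borel"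
    and invariant: "\<And>A. A \<in> sets borel \<Longrightarrow>
               measure \<mu> A = (\<Sum>i\<in>Idx. p i * measure \<mu> ((\<lambda>x. lam * x + t i) -` A))"
    and supp: "measure \<mu> {0..<1} = 1"
begin

sublocale prob_space \<mu> by (rule prob)

lemma borel_in_sets: "A \<in> sets borel \<Longrightarrow> A \<in> sets \<mu>"
  using sets_eq by simp

lemma measure_outside_unit: "A \<in> sets borel \<Longrightarrow> A \<inter> {0..<1} = {} \<Longrightarrow> measure \<mu> A = 0"
proof -
  assume A: "A \<in> sets borel" "A \<inter> {0..<1} = {}"
  have "measure \<mu> A \<le> measure \<mu> (space \<mu> - {0..<1})"
    using A sets_eq_imp_space_eq[OF sets_eq] by (intro finite_measure_mono) (auto intro: borel_in_sets)
  also have "\<dots> = 0" using prob_compl[of "{0..<1}"] supp borel_in_sets by simp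
  finally show ?thesis by (simp add: measure_le_0_iff)
qed

lemma sum_measure_dyadic_interval: "(\<Sum>j\<in>{0..<(2::int)^n}. measure \<mu> (dyadic_interval n j)) = 1"
proof -
  have "measure \<mu> (\<Union>j\<in>{0..<(2::int)^n}. dyadic_interval n j) =
        (\<Sum>j\<in>{0..<(2::int)^n}. measure \<mu> (dyadic_interval n j))"
    by (rule finite_measure_finite_Union)
       (auto intro: borel_in_sets simp: disjoint_family_on_def dyadic_interval_disjoint)
  then show ?thesis using UN_dyadic_interval_unit supp by simp
qed

lemma measure_dyadic_interval_pos_imp_range:
  assumes "measure \<mu> (dyadic_interval n j) > 0" shows "j \<in> {0..<2^n}"
proof -
  have "dyadic_interval n j \<inter> {0..<1} \<noteq> {}"
    using measure_outside_unit[of "dyadic_interval n j"] assms by auto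
  then obtain x where x: "x \<in> dyadic_interval n j" "x \<in> {0..<1}" by blast
  then obtain j' where "j' \<in> {0..<2^n}" "x \<in> dyadic_interval n j'"
    using UN_dyadic_interval_unit[of n] by blast
  then show ?thesis using x(1) by (simp add: mem_dyadic_interval_floor)
qed

lemma measure_dyadic_interval_eq_0:
  "j \<notin> {0..<2^n} \<Longrightarrow> measure \<mu> (dyadic_interval n j) = 0"
  using measure_dyadic_interval_pos_imp_range measure_nonneg[of \<mu>] by (meson linorder_not_le order.antisym)

subsection \<open>The \<open>L\<^sup>q\<close>-spectrum\<close>

definition Lq_sum :: "nat \<Rightarrow> real \<Rightarrow> real" where
  "Lq_sum n x = (\<Sum>J\<in>{J\<in>dyadic n. measure \<mu> J > 0}. measure \<mu> J powr x)"

definition Lq_exp :: "nat \<Rightarrow> real \<Rightarrow> real" where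
  "Lq_exp n x = - log 2 (Lq_sum n x) / real n"

lemma Lq_sum_eq: "Lq_sum n x = (\<Sum>j\<in>{0..<(2::int)^n}. measure \<mu> (dyadic_interval n j) powr x)"
proof -
  have eq: "{J\<in>dyadic n. measure \<mu> J > 0} =
      dyadic_interval n ` {j\<in>{0..<2^n}. measure \<mu> (dyadic_interval n j) > 0}"
    unfolding dyadic_eq_range using measure_dyadic_interval_pos_imp_range by auto
  have "Lq_sum n x = (\<Sum>j\<in>{j\<in>{0..<2^n}. measure \<mu> (dyadic_interval n j) > 0}.
                        measure \<mu> (dyadic_interval n j) powr x)"
    unfolding Lq_sum_def eq by (subst sum.reindex) (auto intro: inj_on_subset[OF inj_dyadic_interval])
  also have "\<dots> = (\<Sum>j\<in>{0..<(2::int)^n}. measure \<mu> (dyadic_interval n j) powr x)"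
    by (rule sum.mono_neutral_left) (use measure_nonneg[of \<mu>] in \<open>auto simp: less_le\<close>)
  finally show ?thesis .
qed

lemma sum_powr_dyadic_interval_le_Lq_sum:
  assumes "finite K" shows "(\<Sum>j\<in>K. measure \<mu> (dyadic_interval n j) powr x) \<le> Lq_sum n x"
proof -
  have "(\<Sum>j\<in>K. measure \<mu> (dyadic_interval n j) powr x) =
        (\<Sum>j\<in>K \<inter> {0..<2^n}. measure \<mu> (dyadic_interval n j) powr x)"
    by (rule sum.mono_neutral_right[OF assms]) (auto simp: measure_dyadic_interval_eq_0)
  also have "\<dots> \<le> (\<Sum>j\<in>{0..<(2::int)^n}. measure \<mu> (dyadic_interval n j) powr x)"
    by (rule sum_mono2) auto
  finally show ?thesis by (simp add: Lq_sum_eq)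
qed

lemma Lq_sum_bounds:
  assumes "x \<ge> 0" shows "2 powr (- (real n * x)) \<le> Lq_sum n x" "Lq_sum n x \<le> 2 powr real n"
proof -
  have "\<exists>j\<in>{0..<(2::int)^n}. measure \<mu> (dyadic_interval n j) \<ge> 1 / 2^n"
  proof (rule ccontr)
    assume "\<not> ?thesis"
    then have "(\<Sum>j\<in>{0..<(2::int)^n}. measure \<mu> (dyadic_interval n j)) < (\<Sum>j\<in>{0..<(2::int)^n}. 1 / 2^n)"
      by (intro sum_strict_mono) (auto simp: not_le)
    then show False using sum_measure_dyadic_interval by simp
  qed
  then obtain j where j: "j \<in> {0..<(2::int)^n}" "measure \<mu> (dyadic_interval n j) \<ge> 1 / 2^n" ..
  have "2 powr (- (real n * x)) = (1 / 2^n) powr x"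
    by (simp add: powr_realpow[symmetric] powr_powr powr_minus_divide[symmetric] divide_powr_uminus)
  also have "\<dots> \<le> measure \<mu> (dyadic_interval n j) powr x" by (rule powr_mono2) (use assms j in auto)
  also have "\<dots> \<le> Lq_sum n x" unfolding Lq_sum_eq by (rule member_le_sum) (use j in auto)
  finally show "2 powr (- (real n * x)) \<le> Lq_sum n x" .
  have "Lq_sum n x \<le> (\<Sum>j\<in>{0..<(2::int)^n}. 1)"
    unfolding Lq_sum_eq by (intro sum_mono) (auto intro!: powr_le1 simp: assms)
  then show "Lq_sum n x \<le> 2 powr real n" by (simp add: powr_realpow)
qed

lemma Lq_sum_pos: "x \<ge> 0 \<Longrightarrow> Lq_sum n x > 0"
  using Lq_sum_bounds(1)[of x n] by (smt (verit) powr_gt_zero)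

lemma log_Lq_sum_bounds:
  assumes "x \<ge> 0" shows "- (real n * x) \<le> log 2 (Lq_sum n x)" "log 2 (Lq_sum n x) \<le> real n"
proof -
  have pos: "Lq_sum n x > 0" using Lq_sum_pos assms by simp
  have "log 2 (2 powr (- (real n * x))) \<le> log 2 (Lq_sum n x)"
    using Lq_sum_bounds(1)[OF assms] pos by (subst log_le_cancel_iff) auto
  then show "- (real n * x) \<le> log 2 (Lq_sum n x)" by simp
  have "log 2 (Lq_sum n x) \<le> log 2 (2 powr real n)"
    using Lq_sum_bounds(2)[OF assms] pos by (subst log_le_cancel_iff) auto
  then show "log 2 (Lq_sum n x) \<le> real n" by simp
qed

lemma Lq_exp_bounds: assumes "x > 0" shows "-1 \<le> Lq_exp n x" "Lq_exp n x \<le> x"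
proof -
  have "-1 \<le> Lq_exp n x \<and> Lq_exp n x \<le> x"
  proof (cases "n = 0")
    case True
    then show ?thesis using assms by (simp add: Lq_exp_def)
  next
    case False
    then have n: "real n > 0" by simp
    have "-1 \<le> - log 2 (Lq_sum n x) / real n"
      using log_Lq_sum_bounds(2)[of x n] assms n by (simp add: field_simps)
    moreover have "- log 2 (Lq_sum n x) / real n \<le> x"
      using log_Lq_sum_bounds(1)[of x n] assms n by (simp add: field_simps)
    ultimately show ?thesis by (simp add: Lq_exp_def)
  qed
  then show "-1 \<le> Lq_exp n x" "Lq_exp n x \<le> x" by auto
qed

lemma tau_mu_eq_liminf: assumes "x > 0" shows "ereal (tau_mu \<mu> x) = liminf (\<lambda>n. ereal (Lq_exp n x))"
proof -
  define L where "L = liminf (\<lambda>n. ereal (Lq_exp n x))"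
  have "ereal (-1) \<le> L" unfolding L_def
    by (rule Liminf_bounded) (use Lq_exp_bounds[OF assms] in auto)
  moreover have "L \<le> ereal x" unfolding L_def
    by (rule Liminf_le) (use Lq_exp_bounds[OF assms] in auto)
  ultimately have "\<bar>L\<bar> \<noteq> \<infinity>" by auto
  then show ?thesis
    unfolding L_def tau_mu_def Lq_exp_def Lq_sum_def by (simp add: ereal_real)
qed

lemma eventually_Lq_exp_gt:
  assumes "x > 0" "\<delta> > 0" shows "\<forall>\<^sub>F n in sequentially. Lq_exp n x > tau_mu \<mu> x - \<delta>"
proof -
  have "ereal (tau_mu \<mu> x - \<delta>) < liminf (\<lambda>n. ereal (Lq_exp n x))"
    unfolding tau_mu_eq_liminf[OF assms(1), symmetric] using assms by simp
  from less_LiminfD[OF this] show ?thesis by simp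
qed

lemma frequently_Lq_exp_lt:
  assumes "x > 0" "\<delta> > 0" shows "\<exists>\<^sub>F n in sequentially. Lq_exp n x < tau_mu \<mu> x + \<delta>"
proof (rule ccontr)
  assume "\<not> ?thesis"
  then have "\<forall>\<^sub>F n in sequentially. ereal (tau_mu \<mu> x + \<delta>) \<le> ereal (Lq_exp n x)"
    unfolding frequently_def by (auto elim: eventually_mono)
  then have "ereal (tau_mu \<mu> x + \<delta>) \<le> liminf (\<lambda>n. ereal (Lq_exp n x))"
    by (rule Liminf_bounded)
  then show False unfolding tau_mu_eq_liminf[OF assms(1), symmetric] using assms by simp
qed

lemma eventually_Lq_sum_le:
  assumes "x > 0" "\<delta> > 0"
  shows "\<forall>\<^sub>F n in sequentially. Lq_sum n x \<le> 2 powr (- (tau_mu \<mu> x - \<delta>) * real n)"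
  using eventually_Lq_exp_gt[OF assms] eventually_gt_at_top[of 0]
proof eventually_elim
  case (elim n)
  then have "log 2 (Lq_sum n x) < - (tau_mu \<mu> x - \<delta>) * real n"
    by (simp add: Lq_exp_def field_simps)
  then have "2 powr log 2 (Lq_sum n x) < 2 powr (- (tau_mu \<mu> x - \<delta>) * real n)" by simp
  then show ?case using Lq_sum_pos[of x n] assms by simp
qed

lemma tau_mu_le_if_frequently:
  assumes "x > 0" and freq: "\<And>\<delta>. \<delta> > 0 \<Longrightarrow> \<exists>\<^sub>F n in sequentially. Lq_exp n x < r + \<delta>"
  shows "tau_mu \<mu> x \<le> r"
proof (rule ccontr)
  assume "\<not> ?thesis"
  then have d: "(tau_mu \<mu> x - r) / 2 > 0" by simp
  have "\<exists>\<^sub>F n in sequentially. Lq_exp n x < r + (tau_mu \<mu> x - r) / 2 \<and>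
                                Lq_exp n x > tau_mu \<mu> x - (tau_mu \<mu> x - r) / 2"
    using freq[OF d] eventually_Lq_exp_gt[OF assms(1) d] by (rule frequently_eventually_frequently)
  then have "\<exists>\<^sub>F n in sequentially. False" by (rule frequently_elim1) (auto simp: field_simps)
  then show False by simp
qed

text \<open>Hoelder's inequality for the exponents \<open>a < b < c\<close>: \<open>log Lq_sum n\<close> is convex.\<close>
lemma Lq_sum_le_interpolate:
  assumes "0 < a" "a < b" "b < c"
  shows "Lq_sum n b \<le> Lq_sum n a powr ((c-b)/(c-a)) * Lq_sum n c powr ((b-a)/(c-a))"
proof -
  define th where "th = (c-b)/(c-a)"
  have ca: "c - a \<noteq> 0" using assms by simp
  have th: "0 \<le> th" "0 \<le> 1 - th" using assms by (auto simp: th_def)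
  have th2: "(b-a)/(c-a) = 1 - th" using ca by (simp add: th_def field_simps)
  have "th * (c - a) = c - b" using ca by (simp add: th_def)
  then have b: "a * th + c * (1 - th) = b" by (simp add: algebra_simps)
  define A where "A = Lq_sum n a"
  define C where "C = Lq_sum n c"
  have A: "A > 0" and C: "C > 0" using Lq_sum_pos assms by (auto simp: A_def C_def)
  define G where "G = A powr th * C powr (1 - th)"
  have G: "G > 0" using A C by (simp add: G_def)
  have "m powr b / G \<le> th * (m powr a / A) + (1 - th) * (m powr c / C)" if m: "m > 0" for m :: real
  proof -
    have "m powr b = m powr (a * th) * m powr (c * (1 - th))"
      unfolding b[symmetric] by (rule powr_add)
    then have "m powr b / G = (m powr a / A) powr th * (m powr c / C) powr (1 - th)"
      using m A C by (simp add: G_def powr_divide powr_powr)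
    also have "\<dots> \<le> th * (m powr a / A) + (1 - th) * (m powr c / C)"
      by (rule Youngs_inequality_0) (use th m A C in auto)
    finally show ?thesis .
  qed
  then have "Lq_sum n b / G \<le> (\<Sum>J\<in>{J\<in>dyadic n. measure \<mu> J > 0}.
      th * (measure \<mu> J powr a / A) + (1 - th) * (measure \<mu> J powr c / C))"
    unfolding Lq_sum_def sum_divide_distrib by (intro sum_mono) auto
  also have "\<dots> = th * (Lq_sum n a / A) + (1 - th) * (Lq_sum n c / C)"
    by (simp add: Lq_sum_def sum.distrib sum_distrib_left sum_divide_distrib)
  also have "\<dots> = 1" using A C th by (simp add: A_def C_def)
  finally show ?thesis using G by (simp add: G_def A_def C_def th2 th_def)
qed

lemma Lq_exp_concave:
  assumes "0 < a" "a < b" "b < c"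
  shows "(c-b) * Lq_exp n a + (b-a) * Lq_exp n c \<le> (c-a) * Lq_exp n b"
proof (cases "n = 0")
  case False
  have pos: "Lq_sum n a > 0" "Lq_sum n c > 0" "Lq_sum n b > 0" using Lq_sum_pos assms by auto
  have "log 2 (Lq_sum n b) \<le> log 2 (Lq_sum n a powr ((c-b)/(c-a)) * Lq_sum n c powr ((b-a)/(c-a)))"
    using Lq_sum_le_interpolate[OF assms, of n] pos by simp
  also have "\<dots> = (c-b)/(c-a) * log 2 (Lq_sum n a) + (b-a)/(c-a) * log 2 (Lq_sum n c)"
    using pos by (simp add: log_mult log_powr)
  finally have "(c-a) * log 2 (Lq_sum n b) \<le>
      (c-a) * ((c-b)/(c-a) * log 2 (Lq_sum n a) + (b-a)/(c-a) * log 2 (Lq_sum n c))"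
    using assms by (intro mult_left_mono) auto
  also have "\<dots> = (c-b) * log 2 (Lq_sum n a) + (b-a) * log 2 (Lq_sum n c)"
    using assms by (simp add: distrib_left)
  finally have key: "(c-a) * log 2 (Lq_sum n b) \<le> (c-b) * log 2 (Lq_sum n a) + (b-a) * log 2 (Lq_sum n c)" .
  have "real n * Lq_exp n x = - log 2 (Lq_sum n x)" for x using False by (simp add: Lq_exp_def)
  then have "real n * ((c-b) * Lq_exp n a + (b-a) * Lq_exp n c) \<le> real n * ((c-a) * Lq_exp n b)"
    using key by (simp add: algebra_simps)
  then show ?thesis using False by simp
qed (simp add: Lq_exp_def)

text \<open>Concavity passes to the liminf along the indices where \<open>Lq_exp n b\<close> is close to \<open>\<tau>(b)\<close>.\<close>
lemma tau_mu_concave: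
  assumes "0 < a" "a < b" "b < c"
  shows "(c-b) * tau_mu \<mu> a + (b-a) * tau_mu \<mu> c \<le> (c-a) * tau_mu \<mu> b"
proof -
  define r where "r = ((c-a) * tau_mu \<mu> b - (c-b) * tau_mu \<mu> a) / (b-a)"
  have "tau_mu \<mu> c \<le> r"
  proof (rule tau_mu_le_if_frequently)
    fix \<delta> :: real assume "\<delta> > 0"
    define e where "e = \<delta> * (b-a) / (2*c-a-b)"
    have e: "e > 0" using \<open>\<delta> > 0\<close> assms by (simp add: e_def)
    have hr: "(b-a) * r = (c-a) * tau_mu \<mu> b - (c-b) * tau_mu \<mu> a" using assms by (simp add: r_def)
    have he: "(2*c-a-b) * e = \<delta> * (b-a)" using assms by (simp add: e_def)
    have "\<exists>\<^sub>F n in sequentially. Lq_exp n b < tau_mu \<mu> b + e"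
      by (rule frequently_Lq_exp_lt) (use assms e in auto)
    moreover have "\<forall>\<^sub>F n in sequentially. Lq_exp n a > tau_mu \<mu> a - e"
      by (rule eventually_Lq_exp_gt) (use assms e in auto)
    ultimately show "\<exists>\<^sub>F n in sequentially. Lq_exp n c < r + \<delta>"
    proof (rule frequently_rev_mp[OF _ eventually_mono], intro impI)
      fix n assume a: "Lq_exp n a > tau_mu \<mu> a - e" and b: "Lq_exp n b < tau_mu \<mu> b + e"
      have "(b-a) * Lq_exp n c \<le> (c-a) * Lq_exp n b - (c-b) * Lq_exp n a"
        using Lq_exp_concave[OF assms, of n] by simp
      also have "\<dots> < (c-a) * (tau_mu \<mu> b + e) - (c-b) * (tau_mu \<mu> a - e)"
        using a b assms by (intro diff_strict_mono mult_strict_left_mono) auto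
      also have "\<dots> = (b-a) * (r + \<delta>)"
        using hr he by (simp add: algebra_simps)
      finally show "Lq_exp n c < r + \<delta>" using assms by simp
    qed
  qed (use assms in simp)
  then show ?thesis using assms by (simp add: r_def field_simps)
qed

lemma tau_mu_le_tangent:
  assumes q: "q > 0" and d: "(tau_mu \<mu> has_real_derivative \<alpha>) (at q)" and x: "x > 0"
  shows "tau_mu \<mu> x \<le> tau_mu \<mu> q + \<alpha> * (x - q)"
proof -
  define T where "T = tau_mu \<mu>"
  define D where "D = (\<lambda>h. (T (q + h) - T q) / h)"
  have "(D \<longlongrightarrow> \<alpha>) (at 0)" using d unfolding DERIV_def D_def T_def by simp
  then have lim: "((\<lambda>h. T q + (x - q) * D h) \<longlongrightarrow> T q + (x - q) * \<alpha>) (at 0)"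
    by (intro tendsto_intros)
  have secant: "h * (T q + (x - q) * D h) = h * T q + (x - q) * (T (q + h) - T q)" if "h \<noteq> 0" for h
  proof -
    have hD: "h * D h = T (q + h) - T q" using that by (simp add: D_def)
    have "h * (T q + (x - q) * D h) = h * T q + (x - q) * (h * D h)" by (simp add: algebra_simps)
    then show ?thesis by (simp only: hD)
  qed
  consider "x = q" | "x > q" | "x < q" by linarith
  then have "T x \<le> T q + (x - q) * \<alpha>"
  proof cases
    case 2
    have ev: "\<forall>\<^sub>F h in at_left 0. T x \<le> T q + (x - q) * D h"
      unfolding eventually_at_left_field
    proof (intro exI[of _ "-q"] conjI allI impI)
      fix h :: real assume h: "-q < h" "h < 0"
      have "(x - q) * T (q + h) + (q - (q + h)) * T x \<le> (x - (q + h)) * T q"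
        unfolding T_def by (rule tau_mu_concave) (use h 2 in auto)
      then have "(-h) * T x \<le> (-h) * (T q + (x - q) * D h)"
        using secant[of h] h by (simp add: algebra_simps)
      then show "T x \<le> T q + (x - q) * D h" using h by simp
    qed (use q in simp)
    show ?thesis
      by (rule tendsto_le[OF _ _ tendsto_const ev]) (use lim filterlim_at_split in auto)
  next
    case 3
    have ev: "\<forall>\<^sub>F h in at_right 0. T x \<le> T q + (x - q) * D h"
      unfolding eventually_at_right_field
    proof (intro exI[of _ 1] conjI allI impI)
      fix h :: real assume h: "0 < h" "h < 1"
      have "(q + h - q) * T x + (q - x) * T (q + h) \<le> (q + h - x) * T q"
        unfolding T_def by (rule tau_mu_concave) (use h 3 x in auto)
      then have "h * T x \<le> h * (T q + (x - q) * D h)"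
        using secant[of h] h by (simp add: algebra_simps)
      then show "T x \<le> T q + (x - q) * D h" using h by simp
    qed simp
    show ?thesis
      by (rule tendsto_le[OF _ _ tendsto_const ev]) (use lim filterlim_at_split in auto)
  qed simp
  then show ?thesis by (simp add: T_def algebra_simps)
qed

lemma legendre_le_tangent:
  assumes "q > 0" and "(tau_mu \<mu> has_real_derivative \<alpha>) (at q)"
  shows "legendre (tau_mu \<mu>) \<alpha> \<le> \<alpha> * q - tau_mu \<mu> q"
  unfolding legendre_def
proof (rule cINF_lower)
  show "bdd_below ((\<lambda>x. \<alpha> * x - tau_mu \<mu> x) ` {0<..})"
    using tau_mu_le_tangent[OF assms] by (intro bdd_belowI2[of _ "\<alpha> * q - tau_mu \<mu> q"]) (auto simp: algebra_simps)
qed (use assms in simp)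

lemma tau_mu_right_slope:
  assumes "(tau_mu \<mu> has_real_derivative \<alpha>) (at q)" and "\<epsilon> > 0"
  shows "\<exists>h>0. tau_mu \<mu> (q + h) \<ge> tau_mu \<mu> q + h * (\<alpha> - \<epsilon>)"
proof -
  define D where "D = (\<lambda>h. (tau_mu \<mu> (q + h) - tau_mu \<mu> q) / h)"
  have "(D \<longlongrightarrow> \<alpha>) (at_right 0)"
    using assms(1) filterlim_at_split unfolding DERIV_def D_def by auto
  then have "\<forall>\<^sub>F h in at_right 0. D h > \<alpha> - \<epsilon>"
    using assms(2) by (intro order_tendstoD) auto
  then obtain b where "b > 0" and b: "\<And>h. 0 < h \<Longrightarrow> h < b \<Longrightarrow> D h > \<alpha> - \<epsilon>"
    unfolding eventually_at_right_field by auto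
  then have "D (b/2) > \<alpha> - \<epsilon>" "b/2 > 0" by auto
  then show ?thesis by (intro exI[of _ "b/2"]) (auto simp: D_def field_simps)
qed

subsection \<open>Iterating the self-similarity\<close>

definition words :: "nat \<Rightarrow> 'i list set" where
  "words k = {w. set w \<subseteq> Idx \<and> length w = k}"

definition weight :: "'i list \<Rightarrow> real" where
  "weight w = prod_list (map p w)"

lemma finite_words: "finite (words k)"
  unfolding words_def using finite_Idx by (rule finite_lists_length_eq)

lemma weight_pos: "w \<in> words k \<Longrightarrow> weight w > 0"
proof (induction w arbitrary: k)
  case (Cons i w)
  then show ?case by (cases k) (auto simp: words_def weight_def p_pos)
qed (simp add: weight_def)

lemma measure_eq_sum_words:
  assumes A: "A \<in> sets borel"
  shows "measure \<mu> A = (\<Sum>w\<in>words k. weight w * measure \<mu> (iter_map lam t w -` A))"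
proof (induction k)
  case 0
  have "words 0 = {[]}" by (auto simp: words_def)
  then show ?case by (simp add: weight_def)
next
  case (Suc k)
  have step: "measure \<mu> (iter_map lam t w -` A) =
      (\<Sum>i\<in>Idx. p i * measure \<mu> (iter_map lam t (i # w) -` A))" for w
  proof -
    have "(\<lambda>x. lam * x + t i) -` (iter_map lam t w -` A) = iter_map lam t (i # w) -` A" for i
      by auto
    then show ?thesis using invariant[OF vimage_iter_map_borel[OF A, of lam t w]] by simp
  qed
  have "measure \<mu> A = (\<Sum>w\<in>words k. weight w *
      (\<Sum>i\<in>Idx. p i * measure \<mu> (iter_map lam t (i # w) -` A)))"
    unfolding Suc.IH by (rule sum.cong[OF refl]) (subst step, rule refl)
  also have "\<dots> = (\<Sum>w\<in>words k. \<Sum>i\<in>Idx. weight (i # w) * measure \<mu> (iter_map lam t (i # w) -` A))"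
    by (simp add: sum_distrib_left weight_def algebra_simps)
  also have "\<dots> = (\<Sum>(w, i)\<in>words k \<times> Idx. weight (i # w) * measure \<mu> (iter_map lam t (i # w) -` A))"
    by (rule sum.cartesian_product)
  also have "\<dots> = (\<Sum>v\<in>(\<lambda>(w, i). i # w) ` (words k \<times> Idx). weight v * measure \<mu> (iter_map lam t v -` A))"
    by (subst sum.reindex) (auto simp: inj_on_def intro!: sum.cong)
  also have "(\<lambda>(w, i). i # w) ` (words k \<times> Idx) = words (Suc k)"
    unfolding words_def lists_length_Suc_eq by auto
  finally show ?case .
qed

definition words_meeting :: "nat \<Rightarrow> real set \<Rightarrow> 'i list set" where
  "words_meeting k I = {w\<in>words k. iter_map lam t w ` {0..<1} \<inter> I \<noteq> {}}"

lemma measure_eq_sum_words_meeting: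
  assumes J: "J \<in> sets borel" "J \<subseteq> I"
  shows "measure \<mu> J = (\<Sum>w\<in>words_meeting k I. weight w * measure \<mu> (iter_map lam t w -` J))"
  unfolding measure_eq_sum_words[OF J(1), of k] words_meeting_def
proof (rule sum.mono_neutral_right[OF finite_words])
  show "\<forall>w\<in>words k - {w\<in>words k. iter_map lam t w ` {0..<1} \<inter> I \<noteq> {}}.
          weight w * measure \<mu> (iter_map lam t w -` J) = 0"
    using J by (auto intro!: measure_outside_unit vimage_iter_map_borel)
qed auto

lemma unit_interval_subset_vimage_double:
  assumes w: "w \<in> words_meeting k (dyadic_interval s j)" and k: "lam ^ k \<le> 1 / 2^(s+1)"
  shows "{0..<1} \<subseteq> iter_map lam t w -` double_int (dyadic_interval s j)"
proof
  define a where "a = real_of_int j / 2^s"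
  define h where "h = 1 / (2::real)^s"
  have I: "dyadic_interval s j = {a..<a+h}" unfolding dyadic_interval_eq_atLeastLessThan a_def h_def ..
  have dbl: "double_int (dyadic_interval s j) = {a - h/2 ..< a + h + h/2}"
    unfolding I by (subst double_int_atLeastLessThan) (auto simp: h_def)
  fix x :: real assume x: "x \<in> {0..<1}"
  from w obtain x0 where x0: "x0 \<in> {0..<1}" "iter_map lam t w x0 \<in> {a..<a+h}"
    unfolding words_meeting_def I by blast
  have "length w = k" using w by (simp add: words_meeting_def words_def)
  then have "iter_map lam t w x - iter_map lam t w x0 = lam ^ k * (x - x0)"
    using iter_map_affine[of lam t w x] iter_map_affine[of lam t w x0] by (simp add: algebra_simps)
  moreover have "\<bar>x - x0\<bar> < 1" using x x0(1) by auto
  then have "\<bar>lam ^ k * (x - x0)\<bar> < h / 2"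
    using lam k by (simp add: abs_mult h_def order.strict_trans2[OF mult_strict_left_mono[of _ 1]])
  ultimately show "x \<in> iter_map lam t w -` double_int (dyadic_interval s j)"
    using x0(2) unfolding dbl by auto
qed

text \<open>The copies meeting \<open>I \<in> \<D>\<^sub>s\<close> carry all their mass inside \<open>2I\<close>.\<close>
lemma sum_weight_words_meeting_le:
  assumes k: "lam ^ k \<le> 1 / 2^(s+1)"
  shows "(\<Sum>w\<in>words_meeting k (dyadic_interval s j). weight w) \<le> measure \<mu> (double_int (dyadic_interval s j))"
proof -
  let ?R = "words_meeting k (dyadic_interval s j)"
  let ?m = "\<lambda>w. measure \<mu> (iter_map lam t w -` double_int (dyadic_interval s j))"
  have "?m w = 1" if "w \<in> ?R" for w
    using finite_measure_mono[OF unit_interval_subset_vimage_double[OF that k]] supp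
    by (simp add: antisym borel_in_sets vimage_iter_map_borel)
  then have "(\<Sum>w\<in>?R. weight w) = (\<Sum>w\<in>?R. weight w * ?m w)" by simp
  also have "\<dots> \<le> (\<Sum>w\<in>words k. weight w * ?m w)"
    by (rule sum_mono2[OF finite_words]) (auto simp: words_meeting_def less_imp_le weight_pos)
  also have "\<dots> = measure \<mu> (double_int (dyadic_interval s j))"
    by (rule measure_eq_sum_words[symmetric]) simp
  finally show ?thesis .
qed

subsection \<open>Local \<open>L\<^sup>q\<close>-sums\<close>

text \<open>The level-\<open>n\<close> grid covers a grid of mesh \<open>d \<in> [2\<^sup>-\<^sup>n\<^sup>-\<^sup>r, 2\<^sup>-\<^sup>n]\<close> with overlap at most \<open>2 \<cdot> 2\<^sup>r\<close>.\<close>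
lemma Lq_sum_grid_le:
  assumes l: "d > 0" "d \<le> 1 / 2^n" "1 \<le> d * 2^n * 2^r" and K: "finite K" and q: "q \<ge> 0"
  shows "(\<Sum>j\<in>K. measure \<mu> {u + real_of_int j * d ..< u + (real_of_int j + 1) * d} powr q)
      \<le> 2 powr q * (2 * 2^r) * Lq_sum n q"
proof -
  define \<kappa> where "\<kappa> = (\<lambda>j::int. \<lfloor>(u + real_of_int j * d) * 2^n\<rfloor>)"
  define f where "f = (\<lambda>k. measure \<mu> (dyadic_interval n k) powr q)"
  have cell: "{u + real_of_int j * d ..< u + (real_of_int j + 1) * d}
      \<subseteq> dyadic_interval n (\<kappa> j) \<union> dyadic_interval n (\<kappa> j + 1)" for j
    unfolding \<kappa>_def by (rule grid_cell_subset_dyadic_intervals[OF l(2)])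
  have cell_le: "measure \<mu> {u + real_of_int j * d ..< u + (real_of_int j + 1) * d} powr q
      \<le> 2 powr q * (f (\<kappa> j) + f (\<kappa> j + 1))" for j
  proof -
    have "measure \<mu> {u + real_of_int j * d ..< u + (real_of_int j + 1) * d}
        \<le> measure \<mu> (dyadic_interval n (\<kappa> j) \<union> dyadic_interval n (\<kappa> j + 1))"
      by (rule finite_measure_mono[OF cell]) (auto intro: borel_in_sets)
    also have "\<dots> \<le> measure \<mu> (dyadic_interval n (\<kappa> j)) + measure \<mu> (dyadic_interval n (\<kappa> j + 1))"
      by (rule measure_subadditive) (auto intro: borel_in_sets)
    finally show ?thesis
      unfolding f_def using q by (intro order.trans[OF powr_mono2 powr_add_le]) auto
  qed
  have spread: "j - i < 2^r" if "\<kappa> i = \<kappa> j" "i \<le> j" for i j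
    using grid_floor_spread[OF l(3)] that unfolding \<kappa>_def by blast
  have card: "card {j\<in>K. \<kappa> j = k} \<le> 2^r" "card {j\<in>K. \<kappa> j + 1 = k} \<le> 2^r" for k
    using card_fiber_le_of_spread[OF K, of \<kappa> "2^r" k] card_fiber_le_of_spread[OF K, of "\<lambda>j. \<kappa> j + 1" "2^r" k]
      spread by (simp_all add: nat_power_eq)
  have fiber_le: "(\<Sum>j\<in>K. f (g j)) \<le> 2^r * Lq_sum n q" if "\<And>k. card {j\<in>K. g j = k} \<le> 2^r" for g
  proof -
    have "(\<Sum>j\<in>K. f (g j)) \<le> real (2^r) * (\<Sum>k\<in>g ` K. f k)"
      by (rule sum_comp_le_card_fiber[OF K]) (use that in \<open>auto simp: f_def\<close>)
    also have "(\<Sum>k\<in>g ` K. f k) \<le> Lq_sum n q"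
      unfolding f_def by (rule sum_powr_dyadic_interval_le_Lq_sum) (use K in simp)
    finally show ?thesis by simp
  qed
  have "(\<Sum>j\<in>K. measure \<mu> {u + real_of_int j * d ..< u + (real_of_int j + 1) * d} powr q)
      \<le> (\<Sum>j\<in>K. 2 powr q * (f (\<kappa> j) + f (\<kappa> j + 1)))"
    by (rule sum_mono) (rule cell_le)
  also have "\<dots> = 2 powr q * ((\<Sum>j\<in>K. f (\<kappa> j)) + (\<Sum>j\<in>K. f (\<kappa> j + 1)))"
    by (simp only: sum_distrib_left sum.distrib distrib_left)
  also have "\<dots> \<le> 2 powr q * (2^r * Lq_sum n q + 2^r * Lq_sum n q)"
    using fiber_le[of \<kappa>] fiber_le[of "\<lambda>j. \<kappa> j + 1"] card by (intro mult_left_mono add_mono) auto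
  also have "\<dots> = 2 powr q * (2 * 2^r) * Lq_sum n q" by (simp add: algebra_simps)
  finally show ?thesis .
qed

lemma exists_contraction_level: "\<exists>k. lam / 2^(s+1) < lam ^ k \<and> lam ^ k \<le> 1 / 2^(s+1)"
proof -
  let ?P = "\<lambda>k. lam ^ k \<le> 1 / (2::real)^(s+1)"
  obtain k0 where "lam ^ k0 < 1 / (2::real)^(s+1)"
    using real_arch_pow_inv[of "1 / (2::real)^(s+1)" lam] lam by auto
  then have ex: "\<exists>k. ?P k" by (intro exI[of _ k0]) simp
  define k where "k = (LEAST k. ?P k)"
  have Pk: "?P k" unfolding k_def by (rule LeastI_ex[OF ex])
  have "k \<noteq> 0"
  proof
    assume "k = 0"
    moreover have "(1::real) < 2^(s+1)" by (rule one_less_power) auto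
    ultimately show False using Pk by simp
  qed
  have "\<not> ?P (k - 1)" unfolding k_def by (rule not_less_Least) (use \<open>k \<noteq> 0\<close> in \<open>simp add: k_def\<close>)
  then have "1 / 2^(s+1) < lam ^ (k - 1)" by simp
  then have "lam * (1 / 2^(s+1)) < lam * lam ^ (k - 1)" by (rule mult_strict_left_mono[OF _ lam(1)])
  also have "lam * lam ^ (k - 1) = lam ^ k" using \<open>k \<noteq> 0\<close> by (cases k) auto
  finally show ?thesis using Pk by auto
qed

text \<open>With \<open>lam\<^sup>k \<approx> 2\<^sup>-\<^sup>s\<close> and \<open>2\<^sup>c > 1/lam\<close>, a copy \<open>f\<^sub>w\<close> pulls the level-\<open>(s + n + 1 + c)\<close> grid
  back to a grid of mesh between \<open>2\<^sup>-\<^sup>n\<^sup>-\<^sup>c\<close> and \<open>2\<^sup>-\<^sup>n\<close>.\<close>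
lemma Lq_sum_vimage_le:
  assumes w: "w \<in> words k" and k: "lam / 2^(s+1) < lam ^ k" "lam ^ k \<le> 1 / 2^(s+1)"
    and c: "1 / lam < 2^c" and q: "q \<ge> 0" and K: "finite K"
  shows "(\<Sum>j\<in>K. measure \<mu> (iter_map lam t w -` dyadic_interval (s + (n + 1 + c)) j) powr q)
      \<le> 2 powr q * (2 * 2^c) * Lq_sum n q"
proof -
  define X where "X = (2::real)^(s + (n + 1 + c)) * lam^k"
  have split: "(2::real)^(s + (n + 1 + c)) = 2^(s+1) * (2^n * 2^c)" by (simp add: power_add mult_ac)
  have "2^n * 2^c * (1 / 2^c) \<le> 2^n * 2^c * lam" using c lam by (intro mult_left_mono) (auto simp: field_simps)
  also have "\<dots> = 2^(s + (n + 1 + c)) * (lam / 2^(s+1))" unfolding split by simp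
  also have "\<dots> \<le> X" unfolding X_def using k(1) by (intro mult_left_mono) auto
  finally have X_lower: "2^n \<le> X" by simp
  have "X \<le> 2^(s + (n + 1 + c)) * (1 / 2^(s+1))" unfolding X_def using k(2) by (intro mult_left_mono) auto
  then have X_upper: "X \<le> 2^n * 2^c" unfolding split by simp
  have X_pos: "X > 0" using lam by (simp add: X_def)
  have "length w = k" using w by (simp add: words_def)
  then have "(\<Sum>j\<in>K. measure \<mu> (iter_map lam t w -` dyadic_interval (s + (n + 1 + c)) j) powr q) =
      (\<Sum>j\<in>K. measure \<mu> {- iter_map lam t w 0 / lam^k + real_of_int j * (1 / X) ..<
                           - iter_map lam t w 0 / lam^k + (real_of_int j + 1) * (1 / X)} powr q)"
    using lam by (simp add: vimage_iter_map_dyadic_interval X_def)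
  also have "\<dots> \<le> 2 powr q * (2 * 2^c) * Lq_sum n q"
    using X_lower X_upper X_pos by (intro Lq_sum_grid_le K q) (auto simp: field_simps)
  finally show ?thesis .
qed

lemma Lq_sum_subintervals_le:
  assumes q: "q \<ge> 1" and c: "1 / lam < 2^c"
  shows "(\<Sum>J\<in>{J\<in>dyadic (s + (n + 1 + c)). J \<subseteq> dyadic_interval s j0}. measure \<mu> J powr q)
      \<le> 2 powr q * (2 * 2^c) * Lq_sum n q * measure \<mu> (double_int (dyadic_interval s j0)) powr q"
proof -
  define N where "N = s + (n + 1 + c)"
  define I where "I = dyadic_interval s j0"
  obtain k where k: "lam / 2^(s+1) < lam ^ k" "lam ^ k \<le> 1 / 2^(s+1)"
    using exists_contraction_level by blast
  define R where "R = words_meeting k I"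
  define T where "T = (\<Sum>w\<in>R. weight w)"
  define K where "K = {j. dyadic_interval N j \<subseteq> I}"
  define y where "y = (\<lambda>w j. measure \<mu> (iter_map lam t w -` dyadic_interval N j))"
  have finK: "finite K" unfolding K_def N_def I_def by (rule finite_dyadic_subintervals)
  have finR: "finite R" unfolding R_def words_meeting_def using finite_words by simp
  have weight: "w \<in> R \<Longrightarrow> weight w \<ge> 0" for w
    using weight_pos by (force simp: R_def words_meeting_def)
  define C where "C = 2 powr q * (2 * 2^c) * Lq_sum n q"
  have "{J\<in>dyadic N. J \<subseteq> I} = dyadic_interval N ` K" by (auto simp: dyadic_eq_range K_def)
  then have "(\<Sum>J\<in>{J\<in>dyadic N. J \<subseteq> I}. measure \<mu> J powr q) =
      (\<Sum>j\<in>K. measure \<mu> (dyadic_interval N j) powr q)"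
    by (simp add: sum.reindex inj_on_subset[OF inj_dyadic_interval])
  also have "\<dots> = (\<Sum>j\<in>K. (\<Sum>w\<in>R. weight w * y w j) powr q)"
    using measure_eq_sum_words_meeting[of "dyadic_interval N _" I k]
    by (intro sum.cong refl) (simp add: K_def R_def y_def)
  also have "\<dots> \<le> (\<Sum>j\<in>K. T powr (q - 1) * (\<Sum>w\<in>R. weight w * y w j powr q))"
    unfolding T_def using q weight by (intro sum_mono powr_weighted_sum_le[OF finR]) (auto simp: y_def)
  also have "\<dots> = T powr (q - 1) * (\<Sum>w\<in>R. weight w * (\<Sum>j\<in>K. y w j powr q))"
    by (simp add: sum_distrib_left sum.swap[of _ K R])
  also have "\<dots> \<le> T powr (q - 1) * (\<Sum>w\<in>R. weight w * C)"
    using Lq_sum_vimage_le[OF _ k c _ finK] q weight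
    by (intro mult_left_mono sum_mono) (auto simp: y_def N_def R_def C_def words_meeting_def)
  also have "\<dots> = T powr (q - 1) * T * C"
    by (simp add: T_def sum_distrib_right mult.assoc)
  also have "\<dots> = T powr q * C"
    using weight by (simp add: T_def powr_minus_one_mult_self sum_nonneg)
  also have "\<dots> \<le> measure \<mu> (double_int I) powr q * C"
    using sum_weight_words_meeting_le[OF k(2), of j0] q weight Lq_sum_pos[of q n]
    by (intro mult_right_mono powr_mono2) (auto simp: T_def R_def I_def C_def intro: sum_nonneg)
  finally show ?thesis by (simp add: N_def I_def C_def mult_ac)
qed

lemma eventually_Lq_sum_subintervals_le:
  assumes q: "q \<ge> 1" and \<delta>: "\<delta> > 0"
  shows "\<forall>\<^sub>F m in sequentially. \<forall>s::nat. \<forall>I\<in>dyadic s.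
     (\<Sum>J\<in>{J\<in>dyadic (s + m). J \<subseteq> I}. measure \<mu> J powr q)
       \<le> 2 powr (- (tau_mu \<mu> q - \<delta>) * real m) * measure \<mu> (double_int I) powr q"
proof -
  define \<tau> where "\<tau> = tau_mu \<mu> q - \<delta> / 2"
  obtain c :: nat where c: "1 / lam < 2^c" using real_arch_pow[of 2 "1 / lam"] by auto
  define C where "C = 2 powr q * (2 * 2^c) * 2 powr (\<tau> * (real c + 1))"
  obtain N where N: "\<And>n. n \<ge> N \<Longrightarrow> Lq_sum n q \<le> 2 powr (- \<tau> * real n)"
    using eventually_Lq_sum_le[of q "\<delta> / 2"] q \<delta> unfolding eventually_sequentially \<tau>_def by auto
  have "\<forall>\<^sub>F m in sequentially. C \<le> 2 powr (\<delta> / 2 * real m)"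
    by (rule eventually_le_two_powr) (use \<delta> in simp)
  then show ?thesis using eventually_ge_at_top[of "N + c + 1"]
  proof eventually_elim
    case (elim m)
    define n where "n = m - (c + 1)"
    have m: "m = n + 1 + c" and "n \<ge> N" using elim(2) by (auto simp: n_def)
    have "2 powr (- \<tau> * real n) = 2 powr (- \<tau> * real m) * 2 powr (\<tau> * (real c + 1))"
      unfolding powr_add[symmetric] by (simp add: m algebra_simps)
    then have "Lq_sum n q \<le> 2 powr (- \<tau> * real m) * 2 powr (\<tau> * (real c + 1))"
      using N[OF \<open>n \<ge> N\<close>] by simp
    then have "2 powr q * (2 * 2^c) * Lq_sum n q \<le> 2 powr q * (2 * 2^c) * (2 powr (- \<tau> * real m) * 2 powr (\<tau> * (real c + 1)))"
      by (rule mult_left_mono) simp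
    also have "\<dots> = C * 2 powr (- \<tau> * real m)" by (simp add: C_def)
    also have "\<dots> \<le> 2 powr (\<delta> / 2 * real m) * 2 powr (- \<tau> * real m)"
      using elim(1) by (rule mult_right_mono) simp
    also have "\<dots> = 2 powr (- (tau_mu \<mu> q - \<delta>) * real m)"
      by (simp add: \<tau>_def powr_add[symmetric] algebra_simps)
    finally have factor_le: "2 powr q * (2 * 2^c) * Lq_sum n q \<le> 2 powr (- (tau_mu \<mu> q - \<delta>) * real m)" .
    show ?case
    proof (intro allI ballI)
      fix s I assume "I \<in> dyadic s"
      then obtain j where I: "I = dyadic_interval s j" by (auto simp: dyadic_eq_range)
      have "(\<Sum>J\<in>{J\<in>dyadic (s + m). J \<subseteq> I}. measure \<mu> J powr q)
          \<le> 2 powr q * (2 * 2^c) * Lq_sum n q * measure \<mu> (double_int I) powr q"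
        unfolding I m by (rule Lq_sum_subintervals_le[OF q c])
      also have "\<dots> \<le> 2 powr (- (tau_mu \<mu> q - \<delta>) * real m) * measure \<mu> (double_int I) powr q"
        using factor_le by (rule mult_right_mono) simp
      finally show "(\<Sum>J\<in>{J\<in>dyadic (s + m). J \<subseteq> I}. measure \<mu> J powr q)
          \<le> 2 powr (- (tau_mu \<mu> q - \<delta>) * real m) * measure \<mu> (double_int I) powr q" .
    qed
  qed
qed

lemma Lq_sum_subfamily_le:
  assumes I: "I \<in> dyadic s" and D': "D' \<subseteq> {J\<in>dyadic (s + m). J \<subseteq> I}" and q: "q > 0" and h: "h > 0"
    and heavy: "(\<Sum>J\<in>{J\<in>dyadic (s + m). J \<subseteq> I}. measure \<mu> J powr (q + h))
                  \<le> 2 powr (- a * real m) * measure \<mu> (double_int I) powr (q + h)"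
    and card: "real (card D') \<le> 2 powr (b * real m)"
    and e: "\<gamma> * h - a \<le> e" "b - \<gamma> * q \<le> e"
  shows "(\<Sum>J\<in>D'. measure \<mu> J powr q) \<le> 2 * 2 powr (e * real m) * measure \<mu> (double_int I) powr q"
proof -
  obtain j where Ij: "I = dyadic_interval s j" using I by (auto simp: dyadic_eq_range)
  have le_double: "measure \<mu> J \<le> measure \<mu> (double_int I)" if "J \<in> D'" for J
  proof -
    have "J \<subseteq> double_int I" using that D' dyadic_interval_subset_double[of s j] unfolding Ij by blast
    then show ?thesis by (intro finite_measure_mono borel_in_sets) auto
  qed
  have "(\<Sum>J\<in>D'. measure \<mu> J powr q)
      \<le> (2 powr ((\<gamma> * h - a) * real m) + 2 powr ((b - \<gamma> * q) * real m)) * measure \<mu> (double_int I) powr q"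
    by (rule sum_powr_two_scale_le[where E = "{J\<in>dyadic (s + m). J \<subseteq> I}"])
       (use heavy D' card le_double q h finite_dyadic_subsets[of s m j] Ij in auto)
  also have "\<dots> \<le> 2 * 2 powr (e * real m) * measure \<mu> (double_int I) powr q"
  proof -
    have "2 powr ((\<gamma> * h - a) * real m) \<le> 2 powr (e * real m)"
      and "2 powr ((b - \<gamma> * q) * real m) \<le> 2 powr (e * real m)"
      using e by (intro powr_mono mult_right_mono; simp)+
    then show ?thesis by (intro mult_right_mono) (linarith, simp)
  qed
  finally show ?thesis .
qed

text \<open>Heavy intervals are estimated by (ii) at an exponent \<open>q + h\<close> with
  \<open>\<tau>(q + h) \<ge> \<tau>(q) + h(\<alpha> - \<epsilon>/4)\<close>, light ones by counting, with \<open>\<gamma> = \<alpha> - \<epsilon>\<close>.\<close>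
lemma eventually_Lq_sum_sparse_le:
  assumes q: "q > 1" and d: "(tau_mu \<mu> has_real_derivative \<alpha>) (at q)" and \<kappa>: "\<kappa> > 0"
  shows "\<exists>\<eta>>0. \<forall>\<^sub>F m in sequentially. \<forall>s::nat. \<forall>I\<in>dyadic s. \<forall>D'.
        D' \<subseteq> {J\<in>dyadic (s + m). J \<subseteq> I} \<and>
        real (card D') \<le> 2 powr ((legendre (tau_mu \<mu>) \<alpha> - \<kappa>) * real m) \<longrightarrow>
        (\<Sum>J\<in>D'. measure \<mu> J powr q)
          \<le> 2 powr (- (tau_mu \<mu> q + \<eta>) * real m) * measure \<mu> (double_int I) powr q"
proof -
  define \<tau> where "\<tau> = tau_mu \<mu> q"
  define \<epsilon> where "\<epsilon> = \<kappa> / (2 * q)"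
  have \<epsilon>: "\<epsilon> > 0" "\<epsilon> * q = \<kappa> / 2" using \<kappa> q by (auto simp: \<epsilon>_def)
  obtain h where h: "h > 0" "tau_mu \<mu> (q + h) \<ge> \<tau> + h * (\<alpha> - \<epsilon> / 4)"
    using tau_mu_right_slope[OF d, of "\<epsilon> / 4"] \<epsilon> unfolding \<tau>_def by auto
  define \<eta> where "\<eta> = min (\<epsilon> * h / 2) (\<kappa> / 2)"
  have \<eta>: "\<eta> > 0" using \<epsilon> h \<kappa> by (simp add: \<eta>_def)
  have leg: "legendre (tau_mu \<mu>) \<alpha> \<le> \<alpha> * q - \<tau>"
    unfolding \<tau>_def by (rule legendre_le_tangent) (use q d in auto)
  have e: "(\<alpha> - \<epsilon>) * h - (tau_mu \<mu> (q + h) - \<epsilon> * h / 4) \<le> - (\<tau> + \<eta>)"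
    "(legendre (tau_mu \<mu>) \<alpha> - \<kappa>) - (\<alpha> - \<epsilon>) * q \<le> - (\<tau> + \<eta>)"
    using h(2) leg \<epsilon>(2) by (auto simp: \<eta>_def algebra_simps)
  have "\<forall>\<^sub>F m in sequentially. \<forall>s::nat. \<forall>I\<in>dyadic s.
     (\<Sum>J\<in>{J\<in>dyadic (s + m). J \<subseteq> I}. measure \<mu> J powr (q + h))
       \<le> 2 powr (- (tau_mu \<mu> (q + h) - \<epsilon> * h / 4) * real m) * measure \<mu> (double_int I) powr (q + h)"
    by (rule eventually_Lq_sum_subintervals_le) (use q h \<epsilon> in auto)
  moreover have "\<forall>\<^sub>F m in sequentially. 2 \<le> 2 powr (\<eta> / 2 * real m)"
    by (rule eventually_le_two_powr) (use \<eta> in simp)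
  ultimately have "\<forall>\<^sub>F m in sequentially. \<forall>s::nat. \<forall>I\<in>dyadic s. \<forall>D'.
        D' \<subseteq> {J\<in>dyadic (s + m). J \<subseteq> I} \<and>
        real (card D') \<le> 2 powr ((legendre (tau_mu \<mu>) \<alpha> - \<kappa>) * real m) \<longrightarrow>
        (\<Sum>J\<in>D'. measure \<mu> J powr q)
          \<le> 2 powr (- (\<tau> + \<eta> / 2) * real m) * measure \<mu> (double_int I) powr q"
  proof (eventually_elim, intro allI ballI impI, elim conjE)
    fix m s I D' assume heavy: "\<forall>s. \<forall>I\<in>dyadic s. (\<Sum>J\<in>{J\<in>dyadic (s + m). J \<subseteq> I}. measure \<mu> J powr (q + h))
       \<le> 2 powr (- (tau_mu \<mu> (q + h) - \<epsilon> * h / 4) * real m) * measure \<mu> (double_int I) powr (q + h)"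
      and two: "2 \<le> 2 powr (\<eta> / 2 * real m)"
      and I: "I \<in> dyadic s" and D': "D' \<subseteq> {J\<in>dyadic (s + m). J \<subseteq> I}"
      and card: "real (card D') \<le> 2 powr ((legendre (tau_mu \<mu>) \<alpha> - \<kappa>) * real m)"
    have "(\<Sum>J\<in>D'. measure \<mu> J powr q) \<le> 2 * 2 powr (- (\<tau> + \<eta>) * real m) * measure \<mu> (double_int I) powr q"
      by (rule Lq_sum_subfamily_le[OF I D' _ h(1) _ card e]) (use heavy I q in auto)
    also have "\<dots> \<le> 2 powr (\<eta> / 2 * real m) * 2 powr (- (\<tau> + \<eta>) * real m) * measure \<mu> (double_int I) powr q"
      using two by (intro mult_right_mono) auto
    also have "2 powr (\<eta> / 2 * real m) * 2 powr (- (\<tau> + \<eta>) * real m) = 2 powr (- (\<tau> + \<eta> / 2) * real m)"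
      unfolding powr_add[symmetric] by (rule arg_cong[where f = "(powr) 2"]) (simp add: algebra_simps)
    finally show "(\<Sum>J\<in>D'. measure \<mu> J powr q) \<le> 2 powr (- (\<tau> + \<eta> / 2) * real m) * measure \<mu> (double_int I) powr q" .
  qed
  then show ?thesis using \<eta> unfolding \<tau>_def by (intro exI[of _ "\<eta> / 2"]) auto
qed

end

theorem proposition3p10:
  fixes \<mu> :: "real measure" and Idx :: "'i set" and p t :: "'i \<Rightarrow> real"
    and lam q \<alpha> :: real
  assumes Idx: "finite Idx" "Idx \<noteq> {}"
    and p_pos: "\<And>i. i \<in> Idx \<Longrightarrow> p i > 0"
    and p_sum: "(\<Sum>i\<in>Idx. p i) = 1"
    and lam: "0 < lam" "lam < 1"
    and prob: "prob_space \<mu>" and sets: "sets \<mu> = sets borel"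
    and inv: "\<And>A. A \<in> sets borel \<Longrightarrow>
               measure \<mu> A = (\<Sum>i\<in>Idx. p i * measure \<mu> ((\<lambda>x. lam * x + t i) -` A))"
    and supp: "measure \<mu> {0..<1} = 1"
    and q: "q > 1"
    and deriv: "(tau_mu \<mu> has_real_derivative \<alpha>) (at q)"
  shows
    "(\<forall>\<kappa>>0. \<exists>\<eta>>0. \<forall>\<^sub>F m in sequentially. \<forall>s::nat. \<forall>I\<in>dyadic s. \<forall>D'.
        D' \<subseteq> {J\<in>dyadic (s + m). J \<subseteq> I} \<and>
        real (card D') \<le> 2 powr ((legendre (tau_mu \<mu>) \<alpha> - \<kappa>) * real m) \<longrightarrow>
        (\<Sum>J\<in>D'. measure \<mu> J powr q)
          \<le> 2 powr (- (tau_mu \<mu> q + \<eta>) * real m) * measure \<mu> (double_int I) powr q)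
     \<and>
     (\<forall>\<delta>>0. \<forall>\<^sub>F m in sequentially. \<forall>s::nat. \<forall>I\<in>dyadic s.
        (\<Sum>J\<in>{J\<in>dyadic (s + m). J \<subseteq> I}. measure \<mu> J powr q)
          \<le> 2 powr (- (tau_mu \<mu> q - \<delta>) * real m) * measure \<mu> (double_int I) powr q)"
proof -
  interpret homogeneous_wifs \<mu> Idx p t lam
    by (rule homogeneous_wifs.intro[OF Idx(1) p_pos lam prob sets inv supp])
  show ?thesis
    using eventually_Lq_sum_sparse_le[OF q deriv] eventually_Lq_sum_subintervals_le[of q] q by auto
qed

end
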